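(* Let $A,X^1,\ldots,X^m\in M_n(\mathbb{C})$ and $1\le m\le k\le n$. Then $$D^m\otimes^k(A)(X^1,\ldots,X^m)=\sum_{\sigma\in S_m}\sum_{\substack{j_1,\ldots,j_{m+1}\ge0\\ j_1+\cdots+j_{m+1}=k-m}}(\otimes^{j_1}A)\otimes X^{\sigma(1)}\otimes(\otimes^{j_2}A)\otimes X^{\sigma(2)}\otimes\cdots\otimes X^{\sigma(m)}\otimes(\otimes^{j_{m+1}}A),$$ and consequently $$\|D^m\otimes^kA\|=\frac{k!}{(k-m)!}\|A\|^{k-m}.$$
   Context: $\otimes^kA$ is the $k$-fold tensor power of $A$ acting on $\otimes^k\mathbb{C}^n$, and $\otimes^0A$ is the empty factor (omitted). $D^m\otimes^k(A)(X^1,\ldots,X^m)=\frac{\partial^m}{\partial t_1\cdots\partial t_m}\big|_{t=0}\otimes^k(A+t_1X^1+\cdots+t_mX^m)$. $\|\cdot\|$ on matrices/operators is the operator (spectral) norm, and for the $m$-linear map $D^m\otimes^kA$, $\|D^m\otimes^kA\|=\sup_{\|X^1\|=\cdots=\|X^m\|=1}\|D^m\otimes^k(A)(X^1,\ldots,X^m)\|$. *)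

theory Defs
  imports "HOL-Analysis.Analysis" "Jordan_Normal_Form.Matrix"
begin

definition kron :: "complex mat \<Rightarrow> complex mat \<Rightarrow> complex mat" where
  "kron A B = mat (dim_row A * dim_row B) (dim_col A * dim_col B)
     (\<lambda>(i, j). A $$ (i div dim_row B, j div dim_col B) * B $$ (i mod dim_row B, j mod dim_col B))"

fun tpow :: "nat \<Rightarrow> complex mat \<Rightarrow> complex mat" where
  "tpow 0 A = 1\<^sub>m 1"
| "tpow (Suc k) A = kron A (tpow k A)"

definition vnorm :: "complex vec \<Rightarrow> real" where
  "vnorm x = sqrt (\<Sum>i<dim_vec x. (cmod (x $ i))\<^sup>2)"

definition opnorm :: "complex mat \<Rightarrow> real" where
  "opnorm M = Sup {vnorm (M *\<^sub>v x) | x. x \<in> carrier_vec (dim_col M) \<and> vnorm x = 1}"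

definition mderiv0 :: "(real \<Rightarrow> complex mat) \<Rightarrow> complex mat" where
  "mderiv0 B = mat (dim_row (B 0)) (dim_col (B 0))
     (\<lambda>ij. vector_derivative (\<lambda>t. B t $$ ij) (at 0))"

text \<open>Dm f A [X1,...,Xm] = d/dt1 ... d/dtm at t = 0 of f (A + t1 X1 + ... + tm Xm),
  written as iterated directional derivatives.\<close>
fun Dm :: "(complex mat \<Rightarrow> complex mat) \<Rightarrow> complex mat \<Rightarrow> complex mat list \<Rightarrow> complex mat" where
  "Dm f A [] = f A"
| "Dm f A (X # Xs) = mderiv0 (\<lambda>t. Dm f (A + complex_of_real t \<cdot>\<^sub>m X) Xs)"

definition Dm_norm :: "(complex mat \<Rightarrow> complex mat) \<Rightarrow> nat \<Rightarrow> nat \<Rightarrow> complex mat \<Rightarrow> real" where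
  "Dm_norm f n m A = Sup {opnorm (Dm f A Xs) | Xs. length Xs = m \<and>
      (\<forall>X\<in>set Xs. X \<in> carrier_mat n n \<and> opnorm X = 1)}"

text \<open>interl A [j1,...,j(m+1)] [Y1,...,Ym] =
  (tpow j1 A) (x) Y1 (x) (tpow j2 A) (x) ... (x) Ym (x) (tpow j(m+1) A).\<close>
fun interl :: "complex mat \<Rightarrow> nat list \<Rightarrow> complex mat list \<Rightarrow> complex mat" where
  "interl A [j] [] = tpow j A"
| "interl A (j # js) (Y # Ys) = kron (tpow j A) (kron Y (interl A js Ys))"
| "interl A _ _ = 1\<^sub>m 1"

end

theory Submission
  imports Defs
begin

text \<open>Differentiating \<open>\<otimes>\<^sup>k(A + t X)\<close> at \<open>t = 0\<close> replaces, by the product rule, one factor A by X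
  in all k possible positions. Iterating this for \<open>X\<^sup>1, \<dots>, X\<^sup>m\<close> yields every k-fold tensor product
  with the \<open>X\<^sup>i\<close> in m of the positions and A elsewhere; grouping the terms by the order
  \<open>\<sigma>\<close> in which the \<open>X\<^sup>i\<close> appear and by the lengths \<open>j\<^sub>1, \<dots>, j\<^bsub>m+1\<^esub>\<close> of the runs of A
  between them gives the formula.

  The operator norm is submultiplicative for Kronecker products and multiplicative on tensor
  powers (test \<open>\<otimes>\<^sup>kA\<close> on \<open>\<otimes>\<^sup>kx\<close>), so each of the \<open>m! \<cdot> (k choose m) = k!/(k-m)!\<close> terms has
  norm at most \<open>\<parallel>A\<parallel>\<^bsup>k-m\<^esup>\<close> when all \<open>\<parallel>X\<^sup>i\<parallel> = 1\<close>. For \<open>X\<^sup>i = A/\<parallel>A\<parallel>\<close> all terms equal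
  \<open>\<parallel>A\<parallel>\<^bsup>-m\<^esup> \<otimes>\<^sup>kA\<close>, which shows that the bound is attained.\<close>

section \<open>Kronecker products and tensor powers\<close>

lemma kron_dims [simp]:
  "dim_row (kron A B) = dim_row A * dim_row B" "dim_col (kron A B) = dim_col A * dim_col B"
  by (simp_all add: kron_def)

lemma kron_carrier:
  "A \<in> carrier_mat a b \<Longrightarrow> B \<in> carrier_mat c d \<Longrightarrow> kron A B \<in> carrier_mat (a * c) (b * d)"
  by (simp add: kron_def)

lemma kron_index [simp]:
  "i < dim_row A * dim_row B \<Longrightarrow> j < dim_col A * dim_col B \<Longrightarrow>
   kron A B $$ (i, j) = A $$ (i div dim_row B, j div dim_col B) * B $$ (i mod dim_row B, j mod dim_col B)"
  by (simp add: kron_def)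

lemma kron_index_square:
  "A \<in> carrier_mat n n \<Longrightarrow> B \<in> carrier_mat q q \<Longrightarrow> i < n * q \<Longrightarrow> j < n * q \<Longrightarrow>
   kron A B $$ (i, j) = A $$ (i div q, j div q) * B $$ (i mod q, j mod q)"
  by simp

lemma mod_mult_div_eq_div_mod:
  fixes i b c :: nat
  shows "i mod (b * c) div c = i div c mod b"
proof -
  have "i mod (c * b) = c * (i div c mod b) + i mod c" by (rule mod_mult2_eq)
  then show ?thesis by (cases "c = 0") (simp_all add: mult.commute)
qed

lemma kron_assoc: "kron (kron A B) C = kron A (kron B C)"
proof (rule eq_matI)
  fix i j assume "i < dim_row (kron A (kron B C))" and "j < dim_col (kron A (kron B C))"
  moreover define rb rc cb cc where dims: "rb = dim_row B" "rc = dim_row C" "cb = dim_col B" "cc = dim_col C"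
  ultimately have i: "i < dim_row A * rb * rc" and j: "j < dim_col A * cb * cc"
    by (simp_all add: mult.assoc)
  then have "rb * rc > 0" "cb * cc > 0" by (auto intro: gr0I)
  moreover have "i div rc < dim_row A * rb" "j div cc < dim_col A * cb"
    using i j by (simp_all add: less_mult_imp_div_less)
  moreover have "i div (rb * rc) = i div rc div rb" "j div (cb * cc) = j div cc div cb"
    by (metis div_mult2_eq mult.commute)+
  ultimately show "kron (kron A B) C $$ (i, j) = kron A (kron B C) $$ (i, j)"
    using i j by (simp add: dims mod_mult_div_eq_div_mod mod_mod_cancel mult.assoc)
qed (simp_all add: mult.assoc)

lemma kron_one_left [simp]: "kron (1\<^sub>m (Suc 0)) M = M"
  by (rule eq_matI) auto

lemma kron_smult_left: "kron (c \<cdot>\<^sub>m A) B = c \<cdot>\<^sub>m kron A B"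
  by (rule eq_matI) (auto simp: less_mult_imp_div_less)

lemma kron_smult_right: "kron A (c \<cdot>\<^sub>m B) = c \<cdot>\<^sub>m kron A B"
proof (rule eq_matI)
  fix i j assume "i < dim_row (c \<cdot>\<^sub>m kron A B)" and "j < dim_col (c \<cdot>\<^sub>m kron A B)"
  moreover from this have "dim_row B > 0" "dim_col B > 0" by (auto intro: gr0I)
  ultimately show "kron A (c \<cdot>\<^sub>m B) $$ (i, j) = (c \<cdot>\<^sub>m kron A B) $$ (i, j)" by simp
qed simp_all

lemma tpow_carrier: "A \<in> carrier_mat n n \<Longrightarrow> tpow k A \<in> carrier_mat (n ^ k) (n ^ k)"
  by (induction k) (auto simp: kron_def)

lemma tpow_add: "tpow (a + b) A = kron (tpow a A) (tpow b A)"
  by (induction a) (simp_all add: kron_assoc)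

lemma interl_carrier:
  assumes "A \<in> carrier_mat n n" and "\<forall>Y\<in>set Ys. Y \<in> carrier_mat n n" and "length js = Suc (length Ys)"
  shows "interl A js Ys \<in> carrier_mat (n ^ (sum_list js + length Ys)) (n ^ (sum_list js + length Ys))"
  using assms(2,3)
proof (induction Ys arbitrary: js)
  case Nil
  then obtain j where "js = [j]" by (cases js) auto
  then show ?case using tpow_carrier[OF assms(1)] by simp
next
  case (Cons Y Ys)
  then obtain j js' where js: "js = j # js'" by (cases js) auto
  with Cons have "interl A js' Ys \<in> carrier_mat (n ^ (sum_list js' + length Ys)) (n ^ (sum_list js' + length Ys))"
    by auto
  with Cons.prems have "kron (tpow j A) (kron Y (interl A js' Ys)) \<in>
      carrier_mat (n ^ j * (n * n ^ (sum_list js' + length Ys))) (n ^ j * (n * n ^ (sum_list js' + length Ys)))"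
    by (intro kron_carrier tpow_carrier[OF assms(1)]) auto
  then show ?case using js by (simp add: power_add ac_simps)
qed

lemma interl_Suc_Cons: "interl A (Suc j # js) (Y # Ys) = kron A (interl A (j # js) (Y # Ys))"
  by (simp add: kron_assoc)

section \<open>Shuffled tensor products and their derivatives\<close>

text \<open>The sum of all k-fold Kronecker products whose factors are A, except for the factors Ys,
  which occur in this order.\<close>
fun shuffle_tpow :: "nat \<Rightarrow> complex mat \<Rightarrow> complex mat list \<Rightarrow> complex mat" where
  "shuffle_tpow 0 A [] = 1\<^sub>m 1"
| "shuffle_tpow 0 A (Y # Ys) = 0\<^sub>m 1 1"
| "shuffle_tpow (Suc k) A [] = kron A (shuffle_tpow k A [])"
| "shuffle_tpow (Suc k) A (Y # Ys) = kron Y (shuffle_tpow k A Ys) + kron A (shuffle_tpow k A (Y # Ys))"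

definition insert_at :: "nat \<Rightarrow> 'a \<Rightarrow> 'a list \<Rightarrow> 'a list" where
  "insert_at p x xs = take p xs @ x # drop p xs"

lemma set_insert_at [simp]: "set (insert_at p x xs) = insert x (set xs)"
  unfolding insert_at_def by (metis Un_insert_right append_take_drop_id list.simps(15) set_append)

lemma length_insert_at [simp]: "length (insert_at p x xs) = Suc (length xs)"
  unfolding insert_at_def by simp

lemma insert_at_0 [simp]: "insert_at 0 x xs = x # xs"
  unfolding insert_at_def by simp

lemma insert_at_not_Nil [simp]: "insert_at p x xs \<noteq> []"
  unfolding insert_at_def by simp

lemma insert_at_Suc_Cons [simp]: "insert_at (Suc p) x (y # xs) = y # insert_at p x xs"
  unfolding insert_at_def by simp

lemma nth_insert_at:
  "p \<le> length xs \<Longrightarrow> i \<le> length xs \<Longrightarrow>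
   insert_at p x xs ! i = (if i < p then xs ! i else if i = p then x else xs ! (i - 1))"
  unfolding insert_at_def by (auto simp: nth_append min_def)

lemma shuffle_tpow_carrier:
  "A \<in> carrier_mat n n \<Longrightarrow> \<forall>Y\<in>set Ys. Y \<in> carrier_mat n n \<Longrightarrow>
   shuffle_tpow k A Ys \<in> carrier_mat (n ^ k) (n ^ k)"
proof (induction k A Ys rule: shuffle_tpow.induct)
  case (4 k A Y Ys)
  then show ?case by (auto intro!: kron_carrier[of _ n n _ "n ^ k" "n ^ k", simplified])
qed (auto intro!: kron_carrier[of _ n n _ "n ^ _" "n ^ _", simplified])

lemma shuffle_tpow_Nil: "shuffle_tpow k A [] = tpow k A"
  by (induction k) auto

lemma shuffle_tpow_0_index: "shuffle_tpow 0 A Ys $$ (0, 0) = (if Ys = [] then 1 else 0)"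
  by (cases Ys) auto

lemma shuffle_tpow_Suc_index:
  assumes "A \<in> carrier_mat n n" and "\<forall>Y\<in>set Ys. Y \<in> carrier_mat n n"
    and "i < n ^ Suc k" and "j < n ^ Suc k"
  shows "shuffle_tpow (Suc k) A Ys $$ (i, j) =
      A $$ (i div n ^ k, j div n ^ k) * shuffle_tpow k A Ys $$ (i mod n ^ k, j mod n ^ k)
    + (case Ys of [] \<Rightarrow> 0
       | Y # Zs \<Rightarrow> Y $$ (i div n ^ k, j div n ^ k) * shuffle_tpow k A Zs $$ (i mod n ^ k, j mod n ^ k))"
proof -
  have "i < n * n ^ k" "j < n * n ^ k" using assms(3,4) by simp_all
  note kron_ij = kron_index_square[OF _ _ this]
  have shuffle_carrier: "shuffle_tpow k A Zs \<in> carrier_mat (n ^ k) (n ^ k)"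
    if "\<forall>Y\<in>set Zs. Y \<in> carrier_mat n n" for Zs
    using shuffle_tpow_carrier[OF assms(1) that] .
  show ?thesis
  proof (cases Ys)
    case (Cons Y Zs)
    with assms(2) have Y: "Y \<in> carrier_mat n n" and Zs: "\<forall>Y\<in>set Zs. Y \<in> carrier_mat n n"
      by auto
    have "shuffle_tpow (Suc k) A Ys $$ (i, j) =
        kron Y (shuffle_tpow k A Zs) $$ (i, j) + kron A (shuffle_tpow k A Ys) $$ (i, j)"
      using Cons assms(3,4) carrier_matD[OF kron_carrier[OF assms(1) shuffle_carrier[OF assms(2)]]]
      by (simp add: mult.commute)
    then show ?thesis
      using Cons kron_ij[OF assms(1) shuffle_carrier[OF assms(2)], unfolded Cons]
      by (simp add: kron_ij[OF Y shuffle_carrier[OF Zs]])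
  qed (simp add: kron_ij[OF assms(1) shuffle_carrier])
qed

lemma sum_shuffle_tpow_insert_at_Suc:
  assumes A: "A \<in> carrier_mat n n" and X: "X \<in> carrier_mat n n"
    and Ys: "\<forall>Y\<in>set Ys. Y \<in> carrier_mat n n" and i: "i < n ^ Suc k" and j: "j < n ^ Suc k"
  shows "(\<Sum>p\<le>length Ys. shuffle_tpow (Suc k) A (insert_at p X Ys) $$ (i, j)) =
      A $$ (i div n ^ k, j div n ^ k) *
        (\<Sum>p\<le>length Ys. shuffle_tpow k A (insert_at p X Ys) $$ (i mod n ^ k, j mod n ^ k))
    + X $$ (i div n ^ k, j div n ^ k) * shuffle_tpow k A Ys $$ (i mod n ^ k, j mod n ^ k)
    + (case Ys of [] \<Rightarrow> 0
       | Y # Zs \<Rightarrow> Y $$ (i div n ^ k, j div n ^ k) *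
          (\<Sum>p\<le>length Zs. shuffle_tpow k A (insert_at p X Zs) $$ (i mod n ^ k, j mod n ^ k)))"
proof -
  define a b where "a = (i div n ^ k, j div n ^ k)" and "b = (i mod n ^ k, j mod n ^ k)"
  define c where "c Ws = (case Ws of [] \<Rightarrow> 0 | W # Zs \<Rightarrow> W $$ a * shuffle_tpow k A Zs $$ b)" for Ws
  have "shuffle_tpow (Suc k) A (insert_at p X Ys) $$ (i, j) =
      A $$ a * shuffle_tpow k A (insert_at p X Ys) $$ b + c (insert_at p X Ys)" for p
    unfolding a_def b_def c_def using X Ys by (intro shuffle_tpow_Suc_index[OF A _ i j]) auto
  then have "(\<Sum>p\<le>length Ys. shuffle_tpow (Suc k) A (insert_at p X Ys) $$ (i, j)) =
      A $$ a * (\<Sum>p\<le>length Ys. shuffle_tpow k A (insert_at p X Ys) $$ b)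
      + c (X # Ys) + (\<Sum>p<length Ys. c (insert_at (Suc p) X Ys))"
    by (simp add: sum.distrib sum_distrib_left sum.atMost_shift[of "\<lambda>p. c (insert_at p X Ys)"])
  also have "(\<Sum>p<length Ys. c (insert_at (Suc p) X Ys)) =
      (case Ys of [] \<Rightarrow> 0 | Y # Zs \<Rightarrow> Y $$ a * (\<Sum>p\<le>length Zs. shuffle_tpow k A (insert_at p X Zs) $$ b))"
    by (cases Ys) (simp_all add: c_def sum_distrib_left lessThan_Suc_atMost)
  finally show ?thesis by (cases Ys) (simp_all add: a_def b_def c_def)
qed

lemma line_index_has_vector_derivative:
  assumes "A \<in> carrier_mat r c" and "X \<in> carrier_mat r c" and "i < r" and "j < c"
  shows "((\<lambda>t. (A + complex_of_real t \<cdot>\<^sub>m X) $$ (i, j)) has_vector_derivative X $$ (i, j)) (at 0)"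
proof -
  have "(complex_of_real has_vector_derivative of_real 1) (at 0)"
    by (rule has_vector_derivative_of_real) (rule DERIV_ident)
  then have "((\<lambda>t. A $$ (i, j) + complex_of_real t * X $$ (i, j)) has_vector_derivative 0 + 1 * X $$ (i, j)) (at 0)"
    by (intro derivative_intros) auto
  then show ?thesis using assms by simp
qed

lemma shuffle_tpow_has_vector_derivative:
  assumes A: "A \<in> carrier_mat n n" and X: "X \<in> carrier_mat n n"
  shows "\<forall>Y\<in>set Ys. Y \<in> carrier_mat n n \<Longrightarrow> i < n ^ k \<Longrightarrow> j < n ^ k \<Longrightarrow>
    ((\<lambda>t. shuffle_tpow k (A + complex_of_real t \<cdot>\<^sub>m X) Ys $$ (i, j)) has_vector_derivative
      (\<Sum>p\<le>length Ys. shuffle_tpow k A (insert_at p X Ys) $$ (i, j))) (at 0)"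
proof (induction k arbitrary: Ys i j)
  case 0
  then show ?case by (simp add: shuffle_tpow_0_index)
next
  case (Suc k)
  define At where "At t = A + complex_of_real t \<cdot>\<^sub>m X" for t
  define a b where "a = (i div n ^ k, j div n ^ k)" and "b = (i mod n ^ k, j mod n ^ k)"
  have At: "At t \<in> carrier_mat n n" for t using A X by (simp add: At_def)
  have At0: "At 0 = A" using A X by (intro eq_matI) (auto simp: At_def)
  have ij: "i < n * n ^ k" "j < n * n ^ k" using Suc.prems(2,3) by simp_all
  then have "n ^ k > 0" by (auto intro: gr0I)
  with ij have ab: "fst a < n" "snd a < n" "fst b < n ^ k" "snd b < n ^ k"
    by (auto simp: a_def b_def less_mult_imp_div_less)
  have "(\<lambda>t. shuffle_tpow (Suc k) (At t) Ys $$ (i, j)) = (\<lambda>t. At t $$ a * shuffle_tpow k (At t) Ys $$ b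
      + (case Ys of [] \<Rightarrow> 0 | Y # Zs \<Rightarrow> Y $$ a * shuffle_tpow k (At t) Zs $$ b))"
    (is "_ = (\<lambda>t. ?f t + ?g t)")
    unfolding a_def b_def using shuffle_tpow_Suc_index[OF At Suc.prems] by blast
  moreover have "(?f has_vector_derivative
      A $$ a * (\<Sum>p\<le>length Ys. shuffle_tpow k A (insert_at p X Ys) $$ b)
      + X $$ a * shuffle_tpow k A Ys $$ b) (at 0)"
  proof (rule has_vector_derivative_eq_rhs[OF has_vector_derivative_mult])
    show "((\<lambda>t. At t $$ a) has_vector_derivative X $$ a) (at 0)"
      using line_index_has_vector_derivative[OF A X ab(1,2)] by (simp add: At_def)
    show "((\<lambda>t. shuffle_tpow k (At t) Ys $$ b) has_vector_derivative
        (\<Sum>p\<le>length Ys. shuffle_tpow k A (insert_at p X Ys) $$ b)) (at 0)"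
      using Suc.IH[OF Suc.prems(1) ab(3,4)] by (simp add: At_def)
  qed (simp add: At0)
  moreover have "(?g has_vector_derivative (case Ys of [] \<Rightarrow> 0
        | Y # Zs \<Rightarrow> Y $$ a * (\<Sum>p\<le>length Zs. shuffle_tpow k A (insert_at p X Zs) $$ b))) (at 0)"
    using Suc.prems(1) Suc.IH[OF _ ab(3,4)]
    by (cases Ys) (auto simp: At_def intro!: has_vector_derivative_mult_right)
  ultimately have "((\<lambda>t. shuffle_tpow (Suc k) (At t) Ys $$ (i, j)) has_vector_derivative
      A $$ a * (\<Sum>p\<le>length Ys. shuffle_tpow k A (insert_at p X Ys) $$ b)
      + X $$ a * shuffle_tpow k A Ys $$ b
      + (case Ys of [] \<Rightarrow> 0
         | Y # Zs \<Rightarrow> Y $$ a * (\<Sum>p\<le>length Zs. shuffle_tpow k A (insert_at p X Zs) $$ b))) (at 0)"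
    by (simp only: has_vector_derivative_add)
  then show ?case
    unfolding At_def a_def b_def sum_shuffle_tpow_insert_at_Suc[OF A X Suc.prems] .
qed

section \<open>Inserting into a permutation\<close>

text \<open>The permutation that lists \<open>x # xs\<close> in the order \<open>insert_at p x (permute_list q xs)\<close>.\<close>
definition insert_perm :: "nat \<Rightarrow> (nat \<Rightarrow> nat) \<Rightarrow> nat \<Rightarrow> nat" where
  "insert_perm p q i = (if i < p then Suc (q i) else if i = p then 0 else Suc (q (i - 1)))"

lemma insert_perm_permutes:
  assumes q: "q permutes {..<m}" and p: "p \<le> m"
  shows "insert_perm p q permutes {..<Suc m}"
proof (rule bij_imp_permutes)
  have q_in: "i < m \<Longrightarrow> q i < m" for i using permutes_in_image[OF q] by simp
  have q_inj: "q i = q j \<Longrightarrow> i = j" for i j using permutes_inj[OF q] by (simp add: inj_eq)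
  have into: "insert_perm p q ` {..<Suc m} \<subseteq> {..<Suc m}"
    using q_in p by (auto simp: insert_perm_def)
  have inj: "inj_on (insert_perm p q) {..<Suc m}"
  proof (rule inj_onI)
    fix i j assume "insert_perm p q i = insert_perm p q j"
    then show "i = j"
      using q_inj[of i j] q_inj[of "i - 1" j] q_inj[of i "j - 1"] q_inj[of "i - 1" "j - 1"]
      unfolding insert_perm_def by (auto split: if_splits)
  qed
  show "bij_betw (insert_perm p q) {..<Suc m} {..<Suc m}"
    unfolding bij_betw_def using inj endo_inj_surj[OF _ into inj] by simp
  fix i assume "i \<notin> {..<Suc m}"
  then show "insert_perm p q i = i" using permutes_not_in[OF q, of "i - 1"] p
    unfolding insert_perm_def by auto
qed

lemma insert_perm_inj_on:
  "inj_on (\<lambda>(p, q). insert_perm p q) ({..m} \<times> {q. q permutes {..<m}})"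
proof (rule inj_onI, clarsimp)
  fix p1 q1 p2 q2
  assume q1: "q1 permutes {..<m}" and q2: "q2 permutes {..<m}" and p1: "p1 \<le> m"
    and eq: "insert_perm p1 q1 = insert_perm p2 q2"
  have zero: "insert_perm p q i = 0 \<longleftrightarrow> i = p" for p q i unfolding insert_perm_def by auto
  then have p: "p1 = p2" using eq by metis
  have "q1 i = q2 i" for i
  proof (cases "i < m")
    case True
    then show ?thesis
      using fun_cong[OF eq, of i] fun_cong[OF eq, of "Suc i"] p unfolding insert_perm_def
      by (auto split: if_splits)
  qed (simp add: permutes_not_in[OF q1] permutes_not_in[OF q2])
  with p show "p1 = p2 \<and> q1 = q2" by auto
qed

lemma bij_betw_insert_perm:
  "bij_betw (\<lambda>(p, q). insert_perm p q) ({..m} \<times> {q. q permutes {..<m}}) {\<sigma>. \<sigma> permutes {..<Suc m}}"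
proof -
  have "(\<lambda>(p, q). insert_perm p q) ` ({..m} \<times> {q. q permutes {..<m}}) = {\<sigma>. \<sigma> permutes {..<Suc m}}"
  proof (rule card_subset_eq)
    show "finite {\<sigma>. \<sigma> permutes {..<Suc m}}" by (simp add: finite_permutations)
    show "(\<lambda>(p, q). insert_perm p q) ` ({..m} \<times> {q. q permutes {..<m}}) \<subseteq> {\<sigma>. \<sigma> permutes {..<Suc m}}"
      by (auto intro: insert_perm_permutes)
    show "card ((\<lambda>(p, q). insert_perm p q) ` ({..m} \<times> {q. q permutes {..<m}})) =
        card {\<sigma>. \<sigma> permutes {..<Suc m}}"
      by (simp add: card_image[OF insert_perm_inj_on] card_cartesian_product card_permutations)
  qed
  then show ?thesis unfolding bij_betw_def using insert_perm_inj_on by blast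
qed

lemma permute_list_insert_perm:
  assumes "p \<le> length xs" and "q permutes {..<length xs}"
  shows "permute_list (insert_perm p q) (x # xs) = insert_at p x (permute_list q xs)"
proof (rule nth_equalityI)
  fix i assume "i < length (permute_list (insert_perm p q) (x # xs))"
  with assms show "permute_list (insert_perm p q) (x # xs) ! i = insert_at p x (permute_list q xs) ! i"
    by (auto simp: nth_insert_at permute_list_nth insert_perm_permutes insert_perm_def)
qed simp

lemma sum_permutations_Cons:
  "(\<Sum>\<sigma> | \<sigma> permutes {..<Suc (length xs)}. g (permute_list \<sigma> (x # xs))) =
   (\<Sum>q | q permutes {..<length xs}. \<Sum>p\<le>length xs. g (insert_at p x (permute_list q xs)))"
proof -
  have "(\<Sum>\<sigma> | \<sigma> permutes {..<Suc (length xs)}. g (permute_list \<sigma> (x # xs))) =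
      (\<Sum>(p, q)\<in>{..length xs} \<times> {q. q permutes {..<length xs}}. g (permute_list (insert_perm p q) (x # xs)))"
    by (subst sum.reindex_bij_betw[OF bij_betw_insert_perm, symmetric]) (simp add: case_prod_unfold)
  also have "\<dots> = (\<Sum>(p, q)\<in>{..length xs} \<times> {q. q permutes {..<length xs}}. g (insert_at p x (permute_list q xs)))"
    by (intro sum.cong) (auto simp: permute_list_insert_perm)
  finally show ?thesis by (simp add: sum.cartesian_product[symmetric] sum.swap[of _ "{..length xs}"])
qed

section \<open>The derivative formula\<close>

lemma mderiv0_mat:
  assumes "\<And>i j. i < r \<Longrightarrow> j < c \<Longrightarrow> ((\<lambda>t. f t (i, j)) has_vector_derivative D (i, j)) (at 0)"
  shows "mderiv0 (\<lambda>t. mat r c (f t)) = mat r c D"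
  using assms by (auto simp: mderiv0_def intro!: cong_mat vector_derivative_at)

lemma Dm_tpow_eq_sum_shuffle_tpow:
  assumes "A \<in> carrier_mat n n" and "\<forall>X\<in>set Xs. X \<in> carrier_mat n n"
  shows "Dm (tpow k) A Xs = mat (n ^ k) (n ^ k)
    (\<lambda>ij. \<Sum>\<sigma> | \<sigma> permutes {..<length Xs}. shuffle_tpow k A (permute_list \<sigma> Xs) $$ ij)"
  using assms
proof (induction Xs arbitrary: A)
  case Nil
  then show ?case
    using carrier_matD[OF tpow_carrier[OF Nil(1), of k]] by (auto intro!: eq_matI simp: shuffle_tpow_Nil)
next
  case (Cons X Xs)
  define At where "At t = A + complex_of_real t \<cdot>\<^sub>m X" for t
  have X: "X \<in> carrier_mat n n" and Xs: "\<forall>X\<in>set Xs. X \<in> carrier_mat n n" using Cons.prems by auto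
  have "Dm (tpow k) A (X # Xs) = mderiv0 (\<lambda>t. mat (n ^ k) (n ^ k)
      (\<lambda>ij. \<Sum>q | q permutes {..<length Xs}. shuffle_tpow k (At t) (permute_list q Xs) $$ ij))"
    using Cons.IH[OF _ Xs] Cons.prems(1) X by (simp add: At_def)
  also have "\<dots> = mat (n ^ k) (n ^ k) (\<lambda>ij. \<Sum>q | q permutes {..<length Xs}.
      \<Sum>p\<le>length Xs. shuffle_tpow k A (insert_at p X (permute_list q Xs)) $$ ij)"
  proof (intro mderiv0_mat has_vector_derivative_sum)
    fix i j q assume "i < n ^ k" "j < n ^ k" "q \<in> {q. q permutes {..<length Xs}}"
    then show "((\<lambda>t. shuffle_tpow k (At t) (permute_list q Xs) $$ (i, j)) has_vector_derivative
        (\<Sum>p\<le>length Xs. shuffle_tpow k A (insert_at p X (permute_list q Xs)) $$ (i, j))) (at 0)"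
      using shuffle_tpow_has_vector_derivative[OF Cons.prems(1) X, of "permute_list q Xs"] Xs
      by (simp add: At_def)
  qed
  also have "\<dots> = mat (n ^ k) (n ^ k)
      (\<lambda>ij. \<Sum>\<sigma> | \<sigma> permutes {..<length (X # Xs)}. shuffle_tpow k A (permute_list \<sigma> (X # Xs)) $$ ij)"
    by (simp add: sum_permutations_Cons[where g = "\<lambda>L. shuffle_tpow k A L $$ ij" for ij])
  finally show ?case .
qed

text \<open>The lengths \<open>j\<^sub>1, \<dots>, j\<^bsub>l+1\<^esub>\<close> of the runs of A-factors in a k-fold product
  with l further factors.\<close>
definition gaps :: "nat \<Rightarrow> nat \<Rightarrow> nat list set" where
  "gaps k l = {js. length js = Suc l \<and> sum_list js + l = k}"

lemma finite_gaps: "finite (gaps k l)"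
proof (rule finite_subset)
  show "gaps k l \<subseteq> {js. set js \<subseteq> {0..k} \<and> length js = Suc l}"
    by (auto simp: gaps_def dest: member_le_sum_list)
qed (simp add: finite_lists_length_eq)

lemma gaps_0_right: "gaps k 0 = {[k]}"
  by (auto simp: gaps_def length_Suc_conv)

lemma gaps_not_Nil: "js \<in> gaps k l \<Longrightarrow> js \<noteq> []"
  by (auto simp: gaps_def)

lemma gaps_Suc_Suc:
  "gaps (Suc k) (Suc l) = Cons 0 ` gaps k l \<union> (\<lambda>js. Suc (hd js) # tl js) ` gaps k (Suc l)"
proof (intro equalityI subsetI)
  fix js assume js: "js \<in> gaps (Suc k) (Suc l)"
  then obtain j js' where js_eq: "js = j # js'" using gaps_not_Nil by (meson list.exhaust)
  show "js \<in> Cons 0 ` gaps k l \<union> (\<lambda>js. Suc (hd js) # tl js) ` gaps k (Suc l)"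
  proof (cases j)
    case 0
    then have "js' \<in> gaps k l" using js js_eq by (simp add: gaps_def)
    then show ?thesis using js_eq 0 by blast
  next
    case (Suc j')
    then have "j' # js' \<in> gaps k (Suc l)" using js js_eq by (simp add: gaps_def)
    moreover have "js = Suc (hd (j' # js')) # tl (j' # js')" using js_eq Suc by simp
    ultimately show ?thesis by blast
  qed
next
  fix js assume "js \<in> Cons 0 ` gaps k l \<union> (\<lambda>js. Suc (hd js) # tl js) ` gaps k (Suc l)"
  then consider js' where "js' \<in> gaps k l" "js = 0 # js'"
    | js' where "js' \<in> gaps k (Suc l)" "js = Suc (hd js') # tl js'" by blast
  then show "js \<in> gaps (Suc k) (Suc l)"
  proof cases
    case 2
    then obtain h t where "js' = h # t" using gaps_not_Nil by (meson list.exhaust)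
    with 2 show ?thesis by (simp add: gaps_def)
  qed (simp add: gaps_def)
qed

lemma sum_gaps_Suc_Suc:
  "(\<Sum>js\<in>gaps (Suc k) (Suc l). f js) =
   (\<Sum>js\<in>gaps k l. f (0 # js)) + (\<Sum>js\<in>gaps k (Suc l). f (Suc (hd js) # tl js))"
proof -
  have "inj_on (\<lambda>js. Suc (hd js) # tl js) (gaps k (Suc l))"
  proof (rule inj_onI)
    fix xs ys assume "xs \<in> gaps k (Suc l)" "ys \<in> gaps k (Suc l)" "Suc (hd xs) # tl xs = Suc (hd ys) # tl ys"
    then show "xs = ys" using gaps_not_Nil by (metis list.collapse list.inject nat.inject)
  qed
  moreover have "Cons 0 ` gaps k l \<inter> (\<lambda>js. Suc (hd js) # tl js) ` gaps k (Suc l) = {}" by auto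
  ultimately show ?thesis
    unfolding gaps_Suc_Suc by (simp add: sum.union_disjoint finite_gaps sum.reindex)
qed

lemma interl_carrier_gaps:
  "A \<in> carrier_mat n n \<Longrightarrow> \<forall>Y\<in>set Ys. Y \<in> carrier_mat n n \<Longrightarrow> js \<in> gaps k (length Ys) \<Longrightarrow>
   interl A js Ys \<in> carrier_mat (n ^ k) (n ^ k)"
  using interl_carrier[of A n Ys js] by (simp add: gaps_def)

lemma shuffle_tpow_eq_sum_interl:
  assumes A: "A \<in> carrier_mat n n"
  shows "\<forall>Y\<in>set Ys. Y \<in> carrier_mat n n \<Longrightarrow> i < n ^ k \<Longrightarrow> j < n ^ k \<Longrightarrow>
    shuffle_tpow k A Ys $$ (i, j) = (\<Sum>js\<in>gaps k (length Ys). interl A js Ys $$ (i, j))"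
proof (induction k arbitrary: Ys i j)
  case 0
  then show ?case by (cases Ys) (auto simp: gaps_0_right, simp add: gaps_def)
next
  case (Suc k)
  show ?case
  proof (cases Ys)
    case Nil
    then show ?thesis by (simp add: shuffle_tpow_Nil gaps_0_right)
  next
    case (Cons Y Zs)
    define a b where "a = (i div n ^ k, j div n ^ k)" and "b = (i mod n ^ k, j mod n ^ k)"
    have Y: "Y \<in> carrier_mat n n" and Zs: "\<forall>Y\<in>set Zs. Y \<in> carrier_mat n n"
      using Suc.prems(1) Cons by auto
    have ij: "i < n * n ^ k" "j < n * n ^ k" using Suc.prems(2,3) by simp_all
    then have "n ^ k > 0" by (auto intro: gr0I)
    then have b: "fst b < n ^ k" "snd b < n ^ k" by (simp_all add: b_def)
    note kron_ij = kron_index_square[OF _ interl_carrier_gaps[OF A] ij]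
    have "(\<Sum>js\<in>gaps (Suc k) (length Ys). interl A js Ys $$ (i, j)) =
        (\<Sum>js\<in>gaps k (length Zs). Y $$ a * interl A js Zs $$ b)
      + (\<Sum>js\<in>gaps k (length Ys). A $$ a * interl A js Ys $$ b)"
      unfolding Cons length_Cons sum_gaps_Suc_Suc
    proof (intro arg_cong2[where f = "(+)"] sum.cong refl)
      fix js assume "js \<in> gaps k (length Zs)"
      then show "interl A (0 # js) (Y # Zs) $$ (i, j) = Y $$ a * interl A js Zs $$ b"
        using kron_ij[OF Y Zs] by (simp add: a_def b_def)
    next
      fix js assume js: "js \<in> gaps k (Suc (length Zs))"
      then obtain h t where "js = h # t" by (auto simp: gaps_def length_Suc_conv)
      then have "interl A (Suc (hd js) # tl js) (Y # Zs) = kron A (interl A js (Y # Zs))"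
        by (simp only: list.sel interl_Suc_Cons)
      with js show "interl A (Suc (hd js) # tl js) (Y # Zs) $$ (i, j) = A $$ a * interl A js (Y # Zs) $$ b"
        using kron_ij[OF A Suc.prems(1)[unfolded Cons]] by (simp add: a_def b_def)
    qed
    also have "\<dots> = shuffle_tpow (Suc k) A Ys $$ (i, j)"
      using shuffle_tpow_Suc_index[OF A Suc.prems] Suc.IH[OF Zs b] Suc.IH[OF Suc.prems(1) b] Cons
      by (simp add: a_def b_def sum_distrib_left)
    finally show ?thesis ..
  qed
qed

lemma Dm_tpow_eq_sum_interl:
  assumes "A \<in> carrier_mat n n" and "\<forall>X\<in>set Xs. X \<in> carrier_mat n n"
  shows "Dm (tpow k) A Xs = mat (n ^ k) (n ^ k) (\<lambda>ij.
    \<Sum>\<sigma> | \<sigma> permutes {..<length Xs}. \<Sum>js\<in>gaps k (length Xs). interl A js (permute_list \<sigma> Xs) $$ ij)"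
proof -
  have "shuffle_tpow k A (permute_list \<sigma> Xs) $$ (i, j) =
      (\<Sum>js\<in>gaps k (length Xs). interl A js (permute_list \<sigma> Xs) $$ (i, j))"
    if "\<sigma> permutes {..<length Xs}" "i < n ^ k" "j < n ^ k" for \<sigma> i j
    using shuffle_tpow_eq_sum_interl[OF assms(1), of "permute_list \<sigma> Xs"] that assms(2) by simp
  then show ?thesis unfolding Dm_tpow_eq_sum_shuffle_tpow[OF assms] by (auto intro!: cong_mat sum.cong)
qed

section \<open>The operator norm\<close>

lemma vnorm_eq_L2_set: "vnorm x = L2_set (\<lambda>i. cmod (x $ i)) {..<dim_vec x}"
  unfolding vnorm_def L2_set_def by simp

lemma vnorm_nonneg: "0 \<le> vnorm x"
  unfolding vnorm_eq_L2_set by simp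

lemma vnorm_power2: "(vnorm x)\<^sup>2 = (\<Sum>i<dim_vec x. (cmod (x $ i))\<^sup>2)"
  unfolding vnorm_def by (simp add: sum_nonneg)

lemma vnorm_smult: "vnorm (c \<cdot>\<^sub>v x) = cmod c * vnorm x"
  unfolding vnorm_eq_L2_set by (subst L2_set_right_distrib) (auto intro!: L2_set_cong simp: norm_mult)

lemma vnorm_unit_vec:
  assumes "i < n"
  shows "vnorm (unit_vec n i) = 1"
proof -
  have "(\<Sum>j<n. (cmod (unit_vec n i $ j))\<^sup>2) = (\<Sum>j<n. if j = i then 1 else 0)"
    using assms by (intro sum.cong) auto
  with assms show ?thesis unfolding vnorm_def by simp
qed

lemma cmod_le_vnorm: "i < dim_vec x \<Longrightarrow> cmod (x $ i) \<le> vnorm x"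
  unfolding vnorm_eq_L2_set by (rule member_le_L2_set) auto

lemma vnorm_eq_0_imp_index: "vnorm x = 0 \<Longrightarrow> i < dim_vec x \<Longrightarrow> x $ i = 0"
  unfolding vnorm_eq_L2_set by (subst (asm) L2_set_eq_0_iff) auto

lemma mult_mat_vec_index_sum:
  "i < dim_row M \<Longrightarrow> dim_vec x = dim_col M \<Longrightarrow> (M *\<^sub>v x) $ i = (\<Sum>j<dim_col M. M $$ (i, j) * x $ j)"
  by (simp add: scalar_prod_def atLeast0LessThan)

lemma vnorm_mult_mat_vec_le_sum_entries:
  assumes "dim_vec x = dim_col M"
  shows "vnorm (M *\<^sub>v x) \<le> (\<Sum>i<dim_row M. \<Sum>j<dim_col M. cmod (M $$ (i, j))) * vnorm x"
proof -
  have "vnorm (M *\<^sub>v x) \<le> (\<Sum>i<dim_row M. cmod ((M *\<^sub>v x) $ i))"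
    unfolding vnorm_eq_L2_set dim_mult_mat_vec by (rule L2_set_le_sum) simp
  also have "\<dots> \<le> (\<Sum>i<dim_row M. (\<Sum>j<dim_col M. cmod (M $$ (i, j))) * vnorm x)"
  proof (rule sum_mono)
    fix i assume i: "i \<in> {..<dim_row M}"
    have "cmod ((M *\<^sub>v x) $ i) \<le> (\<Sum>j<dim_col M. cmod (M $$ (i, j) * x $ j))"
      using i assms by (subst mult_mat_vec_index_sum) (auto intro: norm_sum)
    also have "\<dots> \<le> (\<Sum>j<dim_col M. cmod (M $$ (i, j)) * vnorm x)"
      using assms cmod_le_vnorm by (auto simp: norm_mult intro!: sum_mono mult_left_mono)
    finally show "cmod ((M *\<^sub>v x) $ i) \<le> (\<Sum>j<dim_col M. cmod (M $$ (i, j))) * vnorm x"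
      by (simp add: sum_distrib_right)
  qed
  finally show ?thesis by (simp add: sum_distrib_right)
qed

lemma smult_mat_mult_vec: "dim_vec x = dim_col M \<Longrightarrow> (c \<cdot>\<^sub>m M) *\<^sub>v x = c \<cdot>\<^sub>v (M *\<^sub>v x)"
  by (rule eq_vecI) (auto simp: scalar_prod_def sum_distrib_left mult.assoc intro!: sum.cong)

lemma bdd_above_opnorm:
  "bdd_above {vnorm (M *\<^sub>v x) | x. x \<in> carrier_vec (dim_col M) \<and> vnorm x = 1}"
proof (rule bdd_aboveI, clarify)
  fix x :: "complex vec" assume "x \<in> carrier_vec (dim_col M)" "vnorm x = 1"
  then show "vnorm (M *\<^sub>v x) \<le> (\<Sum>i<dim_row M. \<Sum>j<dim_col M. cmod (M $$ (i, j)))"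
    using vnorm_mult_mat_vec_le_sum_entries[of x M] by simp
qed

lemma opnorm_upper: "x \<in> carrier_vec (dim_col M) \<Longrightarrow> vnorm x = 1 \<Longrightarrow> vnorm (M *\<^sub>v x) \<le> opnorm M"
  unfolding opnorm_def by (rule cSup_upper[OF _ bdd_above_opnorm]) auto

text \<open>For a matrix without columns the defining set is empty and \<open>opnorm\<close> is the junk value
  \<open>Sup {}\<close>, hence the recurring hypothesis \<open>dim_col M > 0\<close>.\<close>
lemma opnorm_least:
  assumes "dim_col M > 0"
    and "\<And>x. x \<in> carrier_vec (dim_col M) \<Longrightarrow> vnorm x = 1 \<Longrightarrow> vnorm (M *\<^sub>v x) \<le> B"
  shows "opnorm M \<le> B"
  unfolding opnorm_def
proof (rule cSup_least)
  show "{vnorm (M *\<^sub>v x) | x. x \<in> carrier_vec (dim_col M) \<and> vnorm x = 1} \<noteq> {}"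
    using vnorm_unit_vec[OF assms(1)] by (auto intro!: exI[of _ "unit_vec (dim_col M) 0"])
qed (use assms(2) in auto)

lemma opnorm_nonneg: "dim_col M > 0 \<Longrightarrow> 0 \<le> opnorm M"
  using opnorm_upper[of "unit_vec (dim_col M) 0" M] vnorm_unit_vec vnorm_nonneg order_trans
  by (metis unit_vec_carrier)

lemma vnorm_mult_mat_vec_le:
  assumes x: "x \<in> carrier_vec (dim_col M)"
  shows "vnorm (M *\<^sub>v x) \<le> opnorm M * vnorm x"
proof (cases "vnorm x = 0")
  case True
  then have "(M *\<^sub>v x) $ i = 0" if "i < dim_row M" for i
    using that x vnorm_eq_0_imp_index[OF True] by (subst mult_mat_vec_index_sum) auto
  then have "vnorm (M *\<^sub>v x) = 0" unfolding vnorm_eq_L2_set by (intro L2_set_0') auto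
  with True show ?thesis by simp
next
  case False
  then have v: "vnorm x > 0" using vnorm_nonneg[of x] by simp
  define y where "y = complex_of_real (1 / vnorm x) \<cdot>\<^sub>v x"
  have "M *\<^sub>v y = complex_of_real (1 / vnorm x) \<cdot>\<^sub>v (M *\<^sub>v x)"
    unfolding y_def using mult_mat_vec[OF carrier_matI[OF refl refl] x] .
  then have "vnorm (M *\<^sub>v x) / vnorm x = vnorm (M *\<^sub>v y)" using v by (simp add: vnorm_smult norm_divide)
  also have "\<dots> \<le> opnorm M"
    using x v by (intro opnorm_upper) (auto simp: y_def vnorm_smult norm_divide)
  finally show ?thesis using v by (simp add: divide_le_eq mult.commute)
qed

lemma opnorm_smult:
  assumes "dim_col M > 0"
  shows "opnorm (c \<cdot>\<^sub>m M) = cmod c * opnorm M"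
proof -
  have le: "opnorm (c \<cdot>\<^sub>m N) \<le> cmod c * opnorm N" if "dim_col N > 0" for c N
  proof (rule opnorm_least)
    fix x assume x: "x \<in> carrier_vec (dim_col (c \<cdot>\<^sub>m N))" and "vnorm x = 1"
    then have "vnorm ((c \<cdot>\<^sub>m N) *\<^sub>v x) = cmod c * vnorm (N *\<^sub>v x)"
      by (simp add: smult_mat_mult_vec vnorm_smult)
    also have "\<dots> \<le> cmod c * opnorm N"
      using x \<open>vnorm x = 1\<close> by (intro mult_left_mono opnorm_upper) auto
    finally show "vnorm ((c \<cdot>\<^sub>m N) *\<^sub>v x) \<le> cmod c * opnorm N" .
  qed (use that in simp)
  show ?thesis
  proof (cases "c = 0")
    case True
    then show ?thesis using le[OF assms, of c] opnorm_nonneg[of "c \<cdot>\<^sub>m M"] assms by simp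
  next
    case False
    have "(1 / c) \<cdot>\<^sub>m (c \<cdot>\<^sub>m M) = M" using False by (intro eq_matI) auto
    then have "opnorm M \<le> cmod (1 / c) * opnorm (c \<cdot>\<^sub>m M)" using le[of "c \<cdot>\<^sub>m M" "1 / c"] assms by simp
    then have "cmod c * opnorm M \<le> opnorm (c \<cdot>\<^sub>m M)"
      using False by (simp add: norm_divide field_simps)
    then show ?thesis using le[OF assms, of c] by simp
  qed
qed

lemma opnorm_one:
  assumes "n > 0"
  shows "opnorm (1\<^sub>m n) = 1"
proof (rule antisym)
  show "opnorm (1\<^sub>m n) \<le> 1" by (rule opnorm_least) (use assms in auto)
  show "1 \<le> opnorm (1\<^sub>m n)"
    using opnorm_upper[of "unit_vec n 0" "1\<^sub>m n"] vnorm_unit_vec[OF assms] by simp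
qed

lemma L2_set_sum_le: "finite S \<Longrightarrow> L2_set (\<lambda>i. \<Sum>s\<in>S. f s i) A \<le> (\<Sum>s\<in>S. L2_set (f s) A)"
proof (induction S rule: finite_induct)
  case (insert s S)
  then have "L2_set (\<lambda>i. \<Sum>s\<in>insert s S. f s i) A \<le> L2_set (f s) A + L2_set (\<lambda>i. \<Sum>s\<in>S. f s i) A"
    using L2_set_triangle_ineq[of "f s"] by simp
  with insert show ?case by simp
qed (simp add: L2_set_0')

lemma opnorm_sum_le:
  assumes M: "M \<in> carrier_mat r c" and c: "c > 0" and S: "finite S"
    and f: "\<And>s. s \<in> S \<Longrightarrow> f s \<in> carrier_mat r c"
    and entries: "\<And>i j. i < r \<Longrightarrow> j < c \<Longrightarrow> M $$ (i, j) = (\<Sum>s\<in>S. f s $$ (i, j))"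
  shows "opnorm M \<le> (\<Sum>s\<in>S. opnorm (f s))"
proof (rule opnorm_least)
  fix x assume x: "x \<in> carrier_vec (dim_col M)" and x1: "vnorm x = 1"
  have "(M *\<^sub>v x) $ i = (\<Sum>s\<in>S. (f s *\<^sub>v x) $ i)" if i: "i < r" for i
  proof -
    have "(M *\<^sub>v x) $ i = (\<Sum>j<c. (\<Sum>s\<in>S. f s $$ (i, j)) * x $ j)"
      using i M x by (subst mult_mat_vec_index_sum) (auto simp: entries)
    also have "\<dots> = (\<Sum>s\<in>S. \<Sum>j<c. f s $$ (i, j) * x $ j)"
      by (simp add: sum_distrib_right sum.swap[of _ S])
    also have "\<dots> = (\<Sum>s\<in>S. (f s *\<^sub>v x) $ i)"
      using i f M x by (intro sum.cong refl) (subst mult_mat_vec_index_sum, auto)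
    finally show ?thesis .
  qed
  then have "vnorm (M *\<^sub>v x) = L2_set (\<lambda>i. cmod (\<Sum>s\<in>S. (f s *\<^sub>v x) $ i)) {..<r}"
    unfolding vnorm_eq_L2_set using M by (intro L2_set_cong) auto
  also have "\<dots> \<le> L2_set (\<lambda>i. \<Sum>s\<in>S. cmod ((f s *\<^sub>v x) $ i)) {..<r}"
    by (rule L2_set_mono) (auto intro: norm_sum)
  also have "\<dots> \<le> (\<Sum>s\<in>S. L2_set (\<lambda>i. cmod ((f s *\<^sub>v x) $ i)) {..<r})"
    by (rule L2_set_sum_le[OF S])
  also have "\<dots> = (\<Sum>s\<in>S. vnorm (f s *\<^sub>v x))"
    unfolding vnorm_eq_L2_set using f by (intro sum.cong) auto
  also have "\<dots> \<le> (\<Sum>s\<in>S. opnorm (f s))"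
    using f M x x1 by (intro sum_mono opnorm_upper) auto
  finally show "vnorm (M *\<^sub>v x) \<le> (\<Sum>s\<in>S. opnorm (f s))" .
qed (use M c in simp)

section \<open>Operator norms of Kronecker products\<close>

lemma sum_lessThan_mult: "(\<Sum>i<p * q. f i) = (\<Sum>a<p. \<Sum>b<q. f (a * q + b))"
  for p q :: nat
  by (simp add: sum_mult_product add.commute)

lemma sum_lessThan_mult_div_mod: "(\<Sum>i<p * q. f (i div q) (i mod q)) = (\<Sum>a<p. \<Sum>b<q. f a b)"
  for p q :: nat
  unfolding sum_lessThan_mult by (intro sum.cong refl) auto

lemma kron_mult_vec_index:
  assumes M: "M \<in> carrier_mat p p'" and N: "N \<in> carrier_mat q q'" and v: "v \<in> carrier_vec (p' * q')"
    and a: "a < p" and b: "b < q"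
  shows "(kron M N *\<^sub>v v) $ (a * q + b) =
    (M *\<^sub>v vec p' (\<lambda>c. (N *\<^sub>v vec q' (\<lambda>d. v $ (c * q' + d))) $ b)) $ a"
proof -
  have "a * q + b < Suc a * q" using b by simp
  also have "\<dots> \<le> p * q" using a by (intro mult_right_mono) auto
  finally have i: "a * q + b < p * q" .
  have "(kron M N *\<^sub>v v) $ (a * q + b) = (\<Sum>j<p' * q'. kron M N $$ (a * q + b, j) * v $ j)"
    using i M N v by (subst mult_mat_vec_index_sum) auto
  also have "\<dots> = (\<Sum>j<p' * q'. M $$ (a, j div q') * (N $$ (b, j mod q') * v $ j))"
    using i M N b by (intro sum.cong refl) (auto simp: less_mult_imp_div_less)
  also have "\<dots> = (\<Sum>c<p'. M $$ (a, c) * (\<Sum>d<q'. N $$ (b, d) * v $ (c * q' + d)))"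
    unfolding sum_lessThan_mult by (auto simp: sum_distrib_left intro!: sum.cong)
  also have "\<dots> = (M *\<^sub>v vec p' (\<lambda>c. (N *\<^sub>v vec q' (\<lambda>d. v $ (c * q' + d))) $ b)) $ a"
    using a b M N by (simp add: mult_mat_vec_index_sum del: index_mult_mat_vec)
  finally show ?thesis .
qed

lemma opnorm_kron_le:
  assumes M: "M \<in> carrier_mat p p'" and N: "N \<in> carrier_mat q q'" and "p' > 0" and "q' > 0"
  shows "opnorm (kron M N) \<le> opnorm M * opnorm N"
proof (rule opnorm_least)
  fix v assume v: "v \<in> carrier_vec (dim_col (kron M N))" and v1: "vnorm v = 1"
  define V where "V c = vec q' (\<lambda>d. v $ (c * q' + d))" for c
  define Z where "Z b = vec p' (\<lambda>c. (N *\<^sub>v V c) $ b)" for b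
  have nM: "0 \<le> opnorm M" and nN: "0 \<le> opnorm N" using assms opnorm_nonneg by auto
  have sq_le: "(vnorm (K *\<^sub>v x))\<^sup>2 \<le> (opnorm K * vnorm x)\<^sup>2" if "x \<in> carrier_vec (dim_col K)" for K x
    using vnorm_mult_mat_vec_le[OF that] vnorm_nonneg by (intro power_mono) auto
  have "(vnorm (kron M N *\<^sub>v v))\<^sup>2 = (\<Sum>a<p. \<Sum>b<q. (cmod ((M *\<^sub>v Z b) $ a))\<^sup>2)"
    using M N v by (simp add: vnorm_power2 sum_lessThan_mult kron_mult_vec_index V_def Z_def
      del: index_mult_mat_vec)
  also have "\<dots> = (\<Sum>b<q. (vnorm (M *\<^sub>v Z b))\<^sup>2)"
    using M by (subst sum.swap) (simp add: vnorm_power2)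
  also have "\<dots> \<le> (\<Sum>b<q. (opnorm M * vnorm (Z b))\<^sup>2)"
    using M by (intro sum_mono sq_le) (simp add: Z_def)
  also have "\<dots> = (opnorm M)\<^sup>2 * (\<Sum>c<p'. (vnorm (N *\<^sub>v V c))\<^sup>2)"
    using N by (simp add: power_mult_distrib vnorm_power2 sum_distrib_left Z_def sum.swap[of _ "{..<q}"])
  also have "\<dots> \<le> (opnorm M)\<^sup>2 * (\<Sum>c<p'. (opnorm N * vnorm (V c))\<^sup>2)"
    using N by (intro mult_left_mono sum_mono sq_le) (auto simp: V_def)
  also have "\<dots> = (opnorm M)\<^sup>2 * ((opnorm N)\<^sup>2 * (\<Sum>c<p'. (vnorm (V c))\<^sup>2))"
    by (simp add: power_mult_distrib sum_distrib_left)
  also have "(\<Sum>c<p'. (vnorm (V c))\<^sup>2) = (vnorm v)\<^sup>2"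
    using M N v by (simp add: vnorm_power2 V_def sum_lessThan_mult)
  finally have "(vnorm (kron M N *\<^sub>v v))\<^sup>2 \<le> (opnorm M * opnorm N)\<^sup>2"
    using v1 by (simp add: power_mult_distrib)
  then show "vnorm (kron M N *\<^sub>v v) \<le> opnorm M * opnorm N"
    using nM nN by (rule power2_le_imp_le[OF _ mult_nonneg_nonneg])
qed (use assms in simp)

definition kron_vec :: "complex vec \<Rightarrow> complex vec \<Rightarrow> complex vec" where
  "kron_vec x y = vec (dim_vec x * dim_vec y) (\<lambda>i. x $ (i div dim_vec y) * y $ (i mod dim_vec y))"

lemma dim_kron_vec [simp]: "dim_vec (kron_vec x y) = dim_vec x * dim_vec y"
  unfolding kron_vec_def by simp

lemma kron_mult_kron_vec:
  assumes M: "M \<in> carrier_mat p p'" and N: "N \<in> carrier_mat q q'"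
    and x: "x \<in> carrier_vec p'" and y: "y \<in> carrier_vec q'"
  shows "kron M N *\<^sub>v kron_vec x y = kron_vec (M *\<^sub>v x) (N *\<^sub>v y)"
proof (rule eq_vecI)
  fix i assume "i < dim_vec (kron_vec (M *\<^sub>v x) (N *\<^sub>v y))"
  with M N have i: "i < p * q" by simp
  moreover from i have "q > 0" by (auto intro: gr0I)
  ultimately have iq: "i div q < p" "i mod q < q" by (auto simp: less_mult_imp_div_less)
  have "(kron M N *\<^sub>v kron_vec x y) $ i =
      (\<Sum>j<p' * q'. (M $$ (i div q, j div q') * x $ (j div q')) * (N $$ (i mod q, j mod q') * y $ (j mod q')))"
    using i M N x y by (subst mult_mat_vec_index_sum)
      (auto intro!: sum.cong simp: kron_vec_def less_mult_imp_div_less ac_simps)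
  also have "\<dots> = (\<Sum>c<p'. \<Sum>d<q'. (M $$ (i div q, c) * x $ c) * (N $$ (i mod q, d) * y $ d))"
    by (rule sum_lessThan_mult_div_mod)
  also have "\<dots> = (\<Sum>c<p'. M $$ (i div q, c) * x $ c) * (\<Sum>d<q'. N $$ (i mod q, d) * y $ d)"
    by (simp add: sum_product)
  also have "\<dots> = kron_vec (M *\<^sub>v x) (N *\<^sub>v y) $ i"
    using i iq M N x y by (simp add: kron_vec_def mult_mat_vec_index_sum del: index_mult_mat_vec)
  finally show "(kron M N *\<^sub>v kron_vec x y) $ i = kron_vec (M *\<^sub>v x) (N *\<^sub>v y) $ i" .
qed (use M N in simp)

lemma vnorm_kron_vec: "vnorm (kron_vec x y) = vnorm x * vnorm y"
proof -
  have "(\<Sum>i<dim_vec x * dim_vec y. (cmod (kron_vec x y $ i))\<^sup>2) =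
      (\<Sum>i<dim_vec x * dim_vec y. (cmod (x $ (i div dim_vec y)))\<^sup>2 * (cmod (y $ (i mod dim_vec y)))\<^sup>2)"
    by (simp add: kron_vec_def norm_mult power_mult_distrib)
  also have "\<dots> = (\<Sum>a<dim_vec x. \<Sum>b<dim_vec y. (cmod (x $ a))\<^sup>2 * (cmod (y $ b))\<^sup>2)"
    by (rule sum_lessThan_mult_div_mod)
  finally show ?thesis unfolding vnorm_def by (simp add: real_sqrt_mult sum_product[symmetric])
qed

fun tpow_vec :: "nat \<Rightarrow> complex vec \<Rightarrow> complex vec" where
  "tpow_vec 0 x = vec 1 (\<lambda>_. 1)"
| "tpow_vec (Suc k) x = kron_vec x (tpow_vec k x)"

lemma tpow_vec_carrier: "x \<in> carrier_vec n \<Longrightarrow> tpow_vec k x \<in> carrier_vec (n ^ k)"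
proof (induction k)
  case (Suc k)
  then have "dim_vec (tpow_vec k x) = n ^ k" "dim_vec x = n" by auto
  then show ?case unfolding carrier_vec_def by simp
qed simp

lemma vnorm_tpow_vec: "vnorm (tpow_vec k x) = vnorm x ^ k"
proof (induction k)
  case 0
  then show ?case by (simp add: vnorm_def)
qed (simp add: vnorm_kron_vec)

lemma tpow_mult_tpow_vec:
  assumes A: "A \<in> carrier_mat n n" and x: "x \<in> carrier_vec n"
  shows "tpow k A *\<^sub>v tpow_vec k x = tpow_vec k (A *\<^sub>v x)"
proof (induction k)
  case 0
  have "vec 1 (\<lambda>_. 1) \<in> carrier_vec 1" by simp
  from one_mult_mat_vec[OF this] show ?case by simp
next
  case (Suc k)
  have "tpow (Suc k) A *\<^sub>v tpow_vec (Suc k) x = kron_vec (A *\<^sub>v x) (tpow k A *\<^sub>v tpow_vec k x)"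
    using kron_mult_kron_vec[OF A tpow_carrier[OF A] x tpow_vec_carrier[OF x]] by simp
  with Suc show ?case by simp
qed

lemma opnorm_tpow_le:
  assumes A: "A \<in> carrier_mat n n" and n: "n > 0"
  shows "opnorm (tpow k A) \<le> opnorm A ^ k"
proof (induction k)
  case (Suc k)
  have "opnorm (tpow (Suc k) A) \<le> opnorm A * opnorm (tpow k A)"
    using opnorm_kron_le[OF A tpow_carrier[OF A, of k]] n by simp
  also have "\<dots> \<le> opnorm A * opnorm A ^ k"
    using Suc opnorm_nonneg[of A] A n by (intro mult_left_mono) auto
  finally show ?case by simp
qed (simp add: opnorm_one)

lemma opnorm_power_le_opnorm_tpow:
  assumes A: "A \<in> carrier_mat n n" and n: "n > 0"
  shows "opnorm A ^ k \<le> opnorm (tpow k A)"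
proof (cases "k = 0")
  case False
  let ?T = "opnorm (tpow k A)"
  have "opnorm A \<le> root k ?T"
  proof (rule opnorm_least)
    fix x assume "x \<in> carrier_vec (dim_col A)" and x1: "vnorm x = 1"
    with A have x: "x \<in> carrier_vec n" by simp
    have "vnorm (A *\<^sub>v x) ^ k = vnorm (tpow k A *\<^sub>v tpow_vec k x)"
      using tpow_mult_tpow_vec[OF A x] by (simp add: vnorm_tpow_vec)
    also have "\<dots> \<le> ?T"
      using tpow_vec_carrier[OF x, of k] carrier_matD[OF tpow_carrier[OF A, of k]] x1
      by (intro opnorm_upper) (auto simp: vnorm_tpow_vec)
    finally have "root k (vnorm (A *\<^sub>v x) ^ k) \<le> root k ?T"
      using False real_root_le_iff by blast
    then show "vnorm (A *\<^sub>v x) \<le> root k ?T"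
      using False vnorm_nonneg by (simp add: real_root_power_cancel)
  qed (use A n in simp)
  then have "opnorm A ^ k \<le> root k ?T ^ k"
    using opnorm_nonneg[of A] A n by (intro power_mono) auto
  also have "\<dots> = ?T"
    using False opnorm_nonneg[of "tpow k A"] tpow_carrier[OF A, of k] n by (simp add: real_root_pow_pos2)
  finally show ?thesis .
qed (simp add: opnorm_one)

lemma opnorm_tpow: "A \<in> carrier_mat n n \<Longrightarrow> n > 0 \<Longrightarrow> opnorm (tpow k A) = opnorm A ^ k"
  using opnorm_tpow_le opnorm_power_le_opnorm_tpow by (blast intro: antisym)

section \<open>The norm of the derivative\<close>

lemma one_smult_mat [simp]: "(1 :: 'a :: monoid_mult) \<cdot>\<^sub>m M = M"
  by (rule eq_matI) auto

lemma smult_smult_mat: "(a :: 'a :: semigroup_mult) \<cdot>\<^sub>m (b \<cdot>\<^sub>m M) = (a * b) \<cdot>\<^sub>m M"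
  by (rule eq_matI) (auto simp: mult.assoc)

lemma opnorm_interl_le:
  assumes A: "A \<in> carrier_mat n n" and n: "n > 0"
    and "\<forall>Y\<in>set Ys. Y \<in> carrier_mat n n \<and> opnorm Y = 1" and "length js = Suc (length Ys)"
  shows "opnorm (interl A js Ys) \<le> opnorm A ^ sum_list js"
  using assms(3,4)
proof (induction Ys arbitrary: js)
  case Nil
  then obtain j where "js = [j]" by (cases js) auto
  then show ?case using opnorm_tpow[OF A n] by simp
next
  case (Cons Y Ys)
  then obtain j js' where js: "js = j # js'" by (cases js) auto
  have Y: "Y \<in> carrier_mat n n" "opnorm Y = 1" and Ys: "\<forall>Z\<in>set Ys. Z \<in> carrier_mat n n"
    using Cons.prems by auto
  let ?e = "sum_list js' + length Ys"
  have I: "interl A js' Ys \<in> carrier_mat (n ^ ?e) (n ^ ?e)"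
    using interl_carrier[OF A Ys] Cons.prems(2) js by simp
  have YI: "kron Y (interl A js' Ys) \<in> carrier_mat (n * n ^ ?e) (n * n ^ ?e)"
    using kron_carrier[OF Y(1) I] .
  have nonneg: "0 \<le> opnorm A" "0 \<le> opnorm (interl A js' Ys)"
    using A I n opnorm_nonneg by auto
  have "opnorm (interl A js (Y # Ys)) \<le> opnorm (tpow j A) * opnorm (kron Y (interl A js' Ys))"
    using opnorm_kron_le[OF tpow_carrier[OF A] YI] n js by simp
  also have "\<dots> \<le> opnorm A ^ j * (opnorm Y * opnorm (interl A js' Ys))"
    using opnorm_kron_le[OF Y(1) I] n nonneg by (auto simp: opnorm_tpow[OF A n] intro: mult_left_mono)
  also have "\<dots> \<le> opnorm A ^ j * opnorm A ^ sum_list js'"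
    using Y(2) Cons.IH[of js'] Cons.prems js nonneg by (intro mult_left_mono) auto
  finally show ?case using js by (simp add: power_add)
qed

lemma interl_replicate_smult:
  "length js = Suc l \<Longrightarrow> interl B js (replicate l (c \<cdot>\<^sub>m B)) = c ^ l \<cdot>\<^sub>m tpow (sum_list js + l) B"
proof (induction l arbitrary: js)
  case 0
  then obtain j where "js = [j]" by (cases js) auto
  then show ?case by simp
next
  case (Suc l)
  then obtain j js' where js: "js = j # js'" and len: "length js' = Suc l" by (cases js) auto
  have "interl B js (replicate (Suc l) (c \<cdot>\<^sub>m B)) =
      kron (tpow j B) (kron (c \<cdot>\<^sub>m B) (c ^ l \<cdot>\<^sub>m tpow (sum_list js' + l) B))"
    using js Suc.IH[OF len] by simp
  also have "\<dots> = c ^ Suc l \<cdot>\<^sub>m kron (tpow j B) (tpow (Suc (sum_list js' + l)) B)"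
    by (simp add: kron_smult_left kron_smult_right smult_smult_mat mult.commute)
  also have "\<dots> = c ^ Suc l \<cdot>\<^sub>m tpow (sum_list js + Suc l) B"
    using js tpow_add[of j "Suc (sum_list js' + l)" B] by (simp add: add.assoc del: tpow.simps)
  finally show ?case .
qed

lemma interl_eq_if_sum_list_eq_0: "sum_list js = 0 \<Longrightarrow> interl A js Ys = interl B js Ys"
  by (induction A js Ys rule: interl.induct) auto

lemma gaps_conv: "m \<le> k \<Longrightarrow> gaps k m = {js. length js = m + 1 \<and> sum_list js = k - m}"
  by (auto simp: gaps_def)

lemma card_gaps: "m \<le> k \<Longrightarrow> card (gaps k m) = k choose m"
  by (simp add: gaps_conv card_length_sum_list binomial_symmetric[symmetric])

lemma card_permutations_mult_card_gaps:
  "m \<le> k \<Longrightarrow> of_nat (card {\<sigma>. \<sigma> permutes {..<m}}) * of_nat (card (gaps k m)) =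
     (fact k / fact (k - m) :: 'a :: field_char_0)"
  by (simp add: card_permutations card_gaps fact_binomial)

lemma finite_permutations_times_gaps: "finite ({\<sigma>. \<sigma> permutes {..<m}} \<times> gaps k m)"
  by (simp add: finite_permutations finite_gaps)

lemma permute_list_replicate:
  assumes "\<sigma> permutes {..<n}"
  shows "permute_list \<sigma> (replicate n x) = replicate n x"
proof (rule nth_equalityI)
  fix i assume "i < length (permute_list \<sigma> (replicate n x))"
  moreover from this have "\<sigma> i < n" using permutes_in_image[OF assms] by simp
  ultimately show "permute_list \<sigma> (replicate n x) ! i = replicate n x ! i"
    using assms by (simp add: permute_list_nth)
qed simp

lemma opnorm_Dm_tpow_le:
  assumes A: "A \<in> carrier_mat n n" and n: "n > 0" and mk: "m \<le> k" and len: "length Ys = m"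
    and Ys: "\<forall>Y\<in>set Ys. Y \<in> carrier_mat n n \<and> opnorm Y = 1"
  shows "opnorm (Dm (tpow k) A Ys) \<le> fact k / fact (k - m) * opnorm A ^ (k - m)"
proof -
  define S where "S = {\<sigma>. \<sigma> permutes {..<m}} \<times> gaps k m"
  define F where "F = (\<lambda>(\<sigma>, js). interl A js (permute_list \<sigma> Ys))"
  have Ys_carrier: "\<forall>Y\<in>set Ys. Y \<in> carrier_mat n n" using Ys by blast
  have set_perm: "set (permute_list \<sigma> Ys) = set Ys" if "s \<in> S" "s = (\<sigma>, js)" for s \<sigma> js
    using that len by (simp add: S_def)
  have F: "F s \<in> carrier_mat (n ^ k) (n ^ k)" if "s \<in> S" for s
    using that set_perm Ys_carrier len by (auto simp: S_def F_def intro!: interl_carrier_gaps[OF A])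
  have "opnorm (Dm (tpow k) A Ys) \<le> (\<Sum>s\<in>S. opnorm (F s))"
  proof (rule opnorm_sum_le[OF _ _ _ F])
    show "Dm (tpow k) A Ys \<in> carrier_mat (n ^ k) (n ^ k)"
      by (simp add: Dm_tpow_eq_sum_interl[OF A Ys_carrier])
    fix i j assume "i < n ^ k" "j < n ^ k"
    then show "Dm (tpow k) A Ys $$ (i, j) = (\<Sum>s\<in>S. F s $$ (i, j))"
      by (simp add: Dm_tpow_eq_sum_interl[OF A Ys_carrier] len S_def F_def sum.cartesian_product
          case_prod_unfold)
  qed (use n in \<open>simp_all add: S_def finite_permutations_times_gaps\<close>)
  also have "\<dots> \<le> (\<Sum>s\<in>S. opnorm A ^ (k - m))"
  proof (rule sum_mono)
    fix s assume "s \<in> S"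
    moreover obtain \<sigma> js where s: "s = (\<sigma>, js)" by fastforce
    ultimately have "length js = Suc m" "sum_list js = k - m" by (auto simp: S_def gaps_def)
    then show "opnorm (F s) \<le> opnorm A ^ (k - m)"
      using opnorm_interl_le[OF A n, of "permute_list \<sigma> Ys" js] set_perm[OF \<open>s \<in> S\<close> s] Ys len
      by (simp add: s F_def)
  qed
  also have "\<dots> = of_nat (card {\<sigma>. \<sigma> permutes {..<m}}) * of_nat (card (gaps k m)) * opnorm A ^ (k - m)"
    by (simp add: S_def card_cartesian_product)
  also have "\<dots> = fact k / fact (k - m) * opnorm A ^ (k - m)"
    by (simp only: card_permutations_mult_card_gaps[OF mk])
  finally show ?thesis .
qed

lemma Dm_tpow_replicate_smult:
  assumes A: "A \<in> carrier_mat n n" and B: "B \<in> carrier_mat n n" and mk: "m \<le> k"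
    and interl_eq: "\<And>js Ys. js \<in> gaps k m \<Longrightarrow> interl A js Ys = interl B js Ys"
  shows "Dm (tpow k) A (replicate m (c \<cdot>\<^sub>m B)) = (fact k / fact (k - m) * c ^ m) \<cdot>\<^sub>m tpow k B"
proof -
  have "interl A js (permute_list \<sigma> (replicate m (c \<cdot>\<^sub>m B))) = c ^ m \<cdot>\<^sub>m tpow k B"
    if "\<sigma> permutes {..<m}" "js \<in> gaps k m" for \<sigma> js
    using that mk by (simp add: permute_list_replicate interl_eq interl_replicate_smult gaps_def)
  then have "Dm (tpow k) A (replicate m (c \<cdot>\<^sub>m B)) = mat (n ^ k) (n ^ k) (\<lambda>ij.
      of_nat (card {\<sigma>. \<sigma> permutes {..<m}}) * of_nat (card (gaps k m)) * (c ^ m \<cdot>\<^sub>m tpow k B) $$ ij)"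
    using Dm_tpow_eq_sum_interl[OF A, of "replicate m (c \<cdot>\<^sub>m B)" k] B by (simp add: mult.assoc)
  also have "\<dots> = (fact k / fact (k - m) * c ^ m) \<cdot>\<^sub>m tpow k B"
    unfolding card_permutations_mult_card_gaps[OF mk]
    using tpow_carrier[OF B, of k] by (intro eq_matI) (auto simp: mult.assoc)
  finally show ?thesis .
qed

lemma opnorm_Dm_tpow_replicate_smult:
  assumes A: "A \<in> carrier_mat n n" and B: "B \<in> carrier_mat n n" and n: "n > 0" and mk: "m \<le> k"
    and "\<And>js Ys. js \<in> gaps k m \<Longrightarrow> interl A js Ys = interl B js Ys"
  shows "opnorm (Dm (tpow k) A (replicate m (c \<cdot>\<^sub>m B))) = fact k / fact (k - m) * cmod c ^ m * opnorm B ^ k"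
proof -
  have "dim_col (tpow k B) > 0" using tpow_carrier[OF B, of k] n by simp
  moreover have "Dm (tpow k) A (replicate m (c \<cdot>\<^sub>m B)) = (fact k / fact (k - m) * c ^ m) \<cdot>\<^sub>m tpow k B"
    by (rule Dm_tpow_replicate_smult[OF assms(1,2,4,5)])
  ultimately show ?thesis
    by (simp add: opnorm_smult opnorm_tpow[OF B n] norm_mult norm_divide norm_power)
qed

text \<open>The bound is attained at \<open>X\<^sub>i = A / opnorm A\<close>. If \<open>opnorm A = 0\<close>, it is trivial unless
  \<open>k = m\<close>, and then it is attained at \<open>X\<^sub>i = 1\<close>.\<close>
lemma opnorm_Dm_tpow_attained:
  assumes A: "A \<in> carrier_mat n n" and n: "n > 0" and mk: "m \<le> k"
  obtains Ys where "length Ys = m" and "\<forall>Y\<in>set Ys. Y \<in> carrier_mat n n \<and> opnorm Y = 1"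
    and "fact k / fact (k - m) * opnorm A ^ (k - m) \<le> opnorm (Dm (tpow k) A Ys)"
proof (cases "opnorm A = 0")
  case False
  then have pos: "opnorm A > 0" using opnorm_nonneg[of A] A n by simp
  define c where "c = complex_of_real (1 / opnorm A)"
  have "opnorm (c \<cdot>\<^sub>m A) = 1" using A n pos by (simp add: opnorm_smult c_def norm_divide)
  moreover have "opnorm (Dm (tpow k) A (replicate m (c \<cdot>\<^sub>m A))) = fact k / fact (k - m) * opnorm A ^ (k - m)"
    using opnorm_Dm_tpow_replicate_smult[OF A A n mk] pos mk
    by (simp add: c_def norm_divide power_divide power_diff)
  ultimately show ?thesis using A by (intro that[of "replicate m (c \<cdot>\<^sub>m A)"]) auto
next
  case A0: True
  have I: "1\<^sub>m n \<in> carrier_mat n n" "opnorm (1\<^sub>m n) = 1" using opnorm_one[OF n] by auto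
  show ?thesis
  proof (cases "k = m")
    case True
    then have "interl A js Ys = interl (1\<^sub>m n) js Ys" if "js \<in> gaps k m" for js Ys
      using that by (intro interl_eq_if_sum_list_eq_0) (simp add: gaps_def)
    then have "opnorm (Dm (tpow k) A (replicate m (1\<^sub>m n))) = fact k / fact (k - m)"
      using opnorm_Dm_tpow_replicate_smult[OF A I(1) n mk, of 1] I(2) by simp
    then show ?thesis using I True by (intro that[of "replicate m (1\<^sub>m n)"]) auto
  next
    case False
    have "dim_col (Dm (tpow k) A (replicate m (1\<^sub>m n))) > 0"
      using Dm_tpow_eq_sum_interl[OF A, of "replicate m (1\<^sub>m n)" k] n by simp
    then have "0 \<le> opnorm (Dm (tpow k) A (replicate m (1\<^sub>m n)))" by (rule opnorm_nonneg)
    with False mk A0 show ?thesis using I by (intro that[of "replicate m (1\<^sub>m n)"]) (auto simp: power_0_left)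
  qed
qed

lemma Dm_norm_tpow:
  assumes "A \<in> carrier_mat n n" and "n > 0" and "m \<le> k"
  shows "Dm_norm (tpow k) n m A = fact k / fact (k - m) * opnorm A ^ (k - m)"
proof -
  obtain Ys where Ys: "length Ys = m" "\<forall>Y\<in>set Ys. Y \<in> carrier_mat n n \<and> opnorm Y = 1"
    and ge: "fact k / fact (k - m) * opnorm A ^ (k - m) \<le> opnorm (Dm (tpow k) A Ys)"
    using opnorm_Dm_tpow_attained[OF assms] .
  then have eq: "opnorm (Dm (tpow k) A Ys) = fact k / fact (k - m) * opnorm A ^ (k - m)"
    using opnorm_Dm_tpow_le[OF assms(1,2,3) Ys] by simp
  show ?thesis
    unfolding Dm_norm_def
  proof (rule cSup_eq_maximum)
    show "fact k / fact (k - m) * opnorm A ^ (k - m) \<in> {opnorm (Dm (tpow k) A Xs) | Xs.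
        length Xs = m \<and> (\<forall>X\<in>set Xs. X \<in> carrier_mat n n \<and> opnorm X = 1)}"
      using Ys eq[symmetric] by (intro CollectI exI[of _ Ys]) simp
  next
    fix x assume "x \<in> {opnorm (Dm (tpow k) A Xs) | Xs.
        length Xs = m \<and> (\<forall>X\<in>set Xs. X \<in> carrier_mat n n \<and> opnorm X = 1)}"
    then show "x \<le> fact k / fact (k - m) * opnorm A ^ (k - m)"
      using opnorm_Dm_tpow_le[OF assms(1,2,3)] by blast
  qed
qed

theorem lemma3p4:
  fixes A :: "complex mat" and Xs :: "complex mat list" and n m k :: nat
  assumes "A \<in> carrier_mat n n"
    and "length Xs = m"
    and "\<forall>X\<in>set Xs. X \<in> carrier_mat n n"
    and "1 \<le> m" and "m \<le> k" and "k \<le> n"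
  shows "Dm (tpow k) A Xs =
           mat (n ^ k) (n ^ k) (\<lambda>ij.
             \<Sum>\<sigma>\<in>{\<sigma>. \<sigma> permutes {..<m}}.
               \<Sum>js\<in>{js. length js = m + 1 \<and> sum_list js = k - m}.
                 interl A js (map (\<lambda>i. Xs ! \<sigma> i) [0..<m]) $$ ij)
         \<and> Dm_norm (tpow k) n m A = fact k / fact (k - m) * opnorm A ^ (k - m)"
proof -
  have "n > 0" using assms(4-6) by linarith
  then show ?thesis
    using Dm_tpow_eq_sum_interl[OF assms(1,3), of k] Dm_norm_tpow[OF assms(1) _ assms(5)] assms(2,5)
    by (simp add: gaps_conv permute_list_def)
qed

end
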